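(* Let $W,V$ be subspaces of $\mathbb{C}^n$ with $\mathbb{C}^n=W\oplus V^\perp$, let $\{\mathbf{w}_i\}_{i=1}^N$ be a frame for $W$ and let $\{\mathbf{v}_i\}_{i=1}^N$ be an oblique dual frame of $\{\mathbf{w}_i\}_{i=1}^N$ on $V$. Then $$\sum_{i=1}^N|\langle\mathbf{w}_i,\mathbf{v}_i\rangle|^2\ge\frac{d_W^2}{N},$$ where $d_W=\dim W$. Furthermore, equality holds if and only if $\langle\mathbf{w}_i,\mathbf{v}_i\rangle=\frac{d_W}{N}$ for each $i$.
   Context: The inner product on $\mathbb{C}^n$ is $\langle\mathbf{x},\mathbf{y}\rangle=\mathbf{y}^*\mathbf{x}$ (linear in the first argument). $V^\perp$ is the orthogonal complement of $V$. When $\mathbb{C}^n=W\oplus V^\perp$, $\boldsymbol{\pi}_{WV^\perp}$ denotes the oblique projection onto $W$ along $V^\perp$ (identity on $W$, zero on $V^\perp$). A finite family $\{\mathbf{w}_i\}_{i=1}^N\subset W$ is a frame for $W$ if there are $0<A\le B$ with $A\|\mathbf{f}\|^2\le\sum_i|\langle\mathbf{w}_i,\mathbf{f}\rangle|^2\le B\|\mathbf{f}\|^2$ for all $\mathbf{f}\in W$ (equivalently, it spans $W$). A frame $\{\mathbf{v}_i\}_{i=1}^N$ for $V$ (with $\mathbf{v}_i\in V$) is an oblique dual frame of $\{\mathbf{w}_i\}_{i=1}^N$ on $V$ if $\boldsymbol{\pi}_{WV^\perp}\mathbf{f}=\sum_{i=1}^N\langle\mathbf{f},\mathbf{v}_i\rangle\mathbf{w}_i$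 for all $\mathbf{f}\in\mathbb{C}^n$. *)

theory Defs
  imports "HOL-Analysis.Analysis"
begin

text \<open>Complex-linear structure: scalar multiplication (*s); vec.subspace, vec.dim, vec.span
  are the complex-linear notions from Cartesian_Space.\<close>

definition cinner :: "complex ^ 'n \<Rightarrow> complex ^ 'n \<Rightarrow> complex" where
  "cinner x y = (\<Sum>j\<in>UNIV. x $ j * cnj (y $ j))"

definition orth_compl :: "(complex ^ 'n) set \<Rightarrow> (complex ^ 'n) set" where
  "orth_compl V = {x. \<forall>v\<in>V. cinner x v = 0}"

definition direct_sum_UNIV :: "(complex ^ 'n) set \<Rightarrow> (complex ^ 'n) set \<Rightarrow> bool" where
  "direct_sum_UNIV W U \<longleftrightarrow> W \<inter> U = {0} \<and> (\<forall>f. \<exists>w\<in>W. \<exists>u\<in>U. f = w + u)"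

text \<open>Oblique projection onto W along U (meaningful when C^n = W (+) U).\<close>
definition oblique_proj :: "(complex ^ 'n) set \<Rightarrow> (complex ^ 'n) set \<Rightarrow> complex ^ 'n \<Rightarrow> complex ^ 'n" where
  "oblique_proj W U f = (THE w. w \<in> W \<and> f - w \<in> U)"

definition is_frame :: "(complex ^ 'n) set \<Rightarrow> (nat \<Rightarrow> complex ^ 'n) \<Rightarrow> nat \<Rightarrow> bool" where
  "is_frame W w N \<longleftrightarrow> (\<forall>i\<in>{1..N}. w i \<in> W) \<and>
     (\<exists>A B. 0 < A \<and> A \<le> B \<and> (\<forall>f\<in>W.
        A * (norm f)\<^sup>2 \<le> (\<Sum>i=1..N. (cmod (cinner (w i) f))\<^sup>2) \<and>
        (\<Sum>i=1..N. (cmod (cinner (w i) f))\<^sup>2) \<le> B * (norm f)\<^sup>2))"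

definition oblique_dual_frame ::
  "(complex ^ 'n) set \<Rightarrow> (complex ^ 'n) set \<Rightarrow> (nat \<Rightarrow> complex ^ 'n) \<Rightarrow> (nat \<Rightarrow> complex ^ 'n) \<Rightarrow> nat \<Rightarrow> bool" where
  "oblique_dual_frame W V w v N \<longleftrightarrow> is_frame V v N \<and>
     (\<forall>f. oblique_proj W (orth_compl V) f = (\<Sum>i=1..N. cinner f (v i) *s w i))"

end

theory Submission
  imports Defs
begin

(* The operator f |-> sum_i <f, v_i> w_i is the oblique projection onto W: it maps into W and
   fixes W pointwise, so its trace is dim W. Computing the same trace summand by summand gives
   sum_i <w_i, v_i> = d_W. For N complex numbers z_i with real sum d,
   sum_i |z_i - d/N|^2 = sum_i |z_i|^2 - d^2/N, which gives the bound and its equality case. *)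

lemma cmod_diff_of_real_power2:
  "(cmod (z - of_real c))\<^sup>2 = (cmod z)\<^sup>2 - 2 * c * Re z + c\<^sup>2"
  by (simp add: cmod_power2 power2_diff algebra_simps)

lemma sum_cmod_diff_mean_power2:
  fixes z :: "'i \<Rightarrow> complex"
  assumes "(\<Sum>i\<in>I. z i) = of_real d"
  shows "(\<Sum>i\<in>I. (cmod (z i - of_real (d / card I)))\<^sup>2) = (\<Sum>i\<in>I. (cmod (z i))\<^sup>2) - d\<^sup>2 / card I"
proof -
  define c where "c = d / card I"
  have "(\<Sum>i\<in>I. Re (z i)) = d" using arg_cong[OF assms, of Re] by simp
  then have "(\<Sum>i\<in>I. (cmod (z i - of_real c))\<^sup>2) = (\<Sum>i\<in>I. (cmod (z i))\<^sup>2) - 2 * c * d + card I * c\<^sup>2"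
    by (simp add: cmod_diff_of_real_power2 sum.distrib sum_subtractf sum_distrib_left[symmetric])
  also have "\<dots> = (\<Sum>i\<in>I. (cmod (z i))\<^sup>2) - d\<^sup>2 / card I"
    unfolding c_def by (cases "card I = 0") (simp_all add: power2_eq_square)
  finally show ?thesis unfolding c_def .
qed

lemma sum_cmod_power2_ge:
  fixes z :: "'i \<Rightarrow> complex"
  assumes "(\<Sum>i\<in>I. z i) = of_real d"
  shows "d\<^sup>2 / card I \<le> (\<Sum>i\<in>I. (cmod (z i))\<^sup>2)"
  using sum_cmod_diff_mean_power2[OF assms] sum_nonneg[of I "\<lambda>i. (cmod (z i - of_real (d / card I)))\<^sup>2"]
  by simp

lemma sum_cmod_power2_eq_iff:
  fixes z :: "'i \<Rightarrow> complex"
  assumes "(\<Sum>i\<in>I. z i) = of_real d" and "finite I"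
  shows "(\<Sum>i\<in>I. (cmod (z i))\<^sup>2) = d\<^sup>2 / card I \<longleftrightarrow> (\<forall>i\<in>I. z i = of_real (d / card I))"
proof -
  have "(\<Sum>i\<in>I. (cmod (z i))\<^sup>2) = d\<^sup>2 / card I
      \<longleftrightarrow> (\<Sum>i\<in>I. (cmod (z i - of_real (d / card I)))\<^sup>2) = 0"
    using sum_cmod_diff_mean_power2[OF assms(1)] by linarith
  also have "\<dots> \<longleftrightarrow> (\<forall>i\<in>I. z i = of_real (d / card I))"
    using assms(2) by (subst sum_nonneg_eq_0_iff) auto
  finally show ?thesis .
qed

lemma linear_basis_expansion:
  fixes P :: "'a::field ^ 'n \<Rightarrow> 'a ^ 'm"
  assumes "Vector_Spaces.linear (*s) (*s) P"
  shows "P x = (\<Sum>j\<in>UNIV. x $ j *s P (axis j 1))"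
proof -
  have "P x = P (\<Sum>j\<in>UNIV. x $ j *s axis j 1)"
    by (simp only: basis_expansion)
  also have "\<dots> = (\<Sum>j\<in>UNIV. x $ j *s P (axis j 1))"
    by (simp only: vec.linear_sum[OF assms] vec.linear_scale[OF assms])
  finally show ?thesis .
qed

lemma trace_matrix_projection_eq_dim:
  fixes P :: "'a::field ^ 'n \<Rightarrow> 'a ^ 'n"
  assumes lin: "Vector_Spaces.linear (*s) (*s) P" and W: "vec.subspace W"
    and range: "\<And>x. P x \<in> W" and fixes_W: "\<And>x. x \<in> W \<Longrightarrow> P x = x"
  shows "trace (matrix P) = of_nat (vec.dim W)"
proof -
  obtain B where B: "B \<subseteq> W" "vec.independent B" "W \<subseteq> vec.span B" "card B = vec.dim W"
    using vec.basis_exists by blast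
  have "finite B" using B(2) vec.finiteI_independent by blast
  define R where "R = vec.representation B"
  have P_span: "P x \<in> vec.span B" for x using range B(3) by blast
  have coord: "P x $ j = (\<Sum>b\<in>B. R (P x) b * b $ j)" for x j
  proof -
    have "P x = (\<Sum>b\<in>B. R (P x) b *s b)"
      unfolding R_def using vec.sum_representation_eq[OF B(2) P_span \<open>finite B\<close>] by simp
    from arg_cong[OF this, of "\<lambda>y. y $ j"] show ?thesis by (simp add: sum_component)
  qed
  have R_linear: "R (P b) b = (\<Sum>j\<in>UNIV. b $ j * R (P (axis j 1)) b)" for b
  proof -
    have "R (P b) b = R (\<Sum>j\<in>UNIV. b $ j *s P (axis j 1)) b"
      using linear_basis_expansion[OF lin, of b] by (rule arg_cong[where f = "\<lambda>y. R y b"])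
    also have "\<dots> = (\<Sum>j\<in>UNIV. R (b $ j *s P (axis j 1)) b)"
      unfolding R_def by (subst vec.representation_sum[OF B(2)]) (auto intro: vec.span_scale P_span)
    also have "\<dots> = (\<Sum>j\<in>UNIV. b $ j * R (P (axis j 1)) b)"
      unfolding R_def by (simp add: vec.representation_scale[OF B(2) P_span])
    finally show ?thesis .
  qed
  have "trace (matrix P) = (\<Sum>j\<in>UNIV. P (axis j 1) $ j)"
    by (simp add: trace_def matrix_def)
  also have "\<dots> = (\<Sum>b\<in>B. \<Sum>j\<in>UNIV. b $ j * R (P (axis j 1)) b)"
    unfolding coord by (subst sum.swap) (simp add: mult.commute)
  also have "\<dots> = (\<Sum>b\<in>B. R b b)"
    using B(1) by (intro sum.cong) (simp_all add: R_linear[symmetric] fixes_W subsetD)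
  also have "\<dots> = of_nat (card B)"
    unfolding R_def by (simp add: vec.representation_basis[OF B(2)])
  finally show ?thesis using B(4) by simp
qed

definition mixed_frame_operator ::
    "'i set \<Rightarrow> ('i \<Rightarrow> complex ^ 'n) \<Rightarrow> ('i \<Rightarrow> complex ^ 'n) \<Rightarrow> complex ^ 'n \<Rightarrow> complex ^ 'n" where
  "mixed_frame_operator I v w f = (\<Sum>i\<in>I. cinner f (v i) *s w i)"

lemma cinner_axis_left: "cinner (axis j 1) y = cnj (y $ j)"
  unfolding cinner_def axis_def by (simp add: if_distrib[of "\<lambda>a. a * _"] cong: if_cong)

lemma linear_mixed_frame_operator:
  "Vector_Spaces.linear (*s) (*s) (mixed_frame_operator I v w)"
  unfolding Vector_Spaces.linear_iff mixed_frame_operator_def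
  by (simp add: vec.vector_space_axioms cinner_def sum_distrib_left ring_distribs sum.distrib
      vec.scale_sum_right mult.assoc vec.scale_sum_left)

lemma trace_matrix_mixed_frame_operator:
  "trace (matrix (mixed_frame_operator I v w)) = (\<Sum>i\<in>I. cinner (w i) (v i))"
proof -
  have "trace (matrix (mixed_frame_operator I v w)) = (\<Sum>j\<in>UNIV. \<Sum>i\<in>I. cnj (v i $ j) * w i $ j)"
    by (simp add: trace_def matrix_def mixed_frame_operator_def sum_component cinner_axis_left)
  also have "\<dots> = (\<Sum>i\<in>I. cinner (w i) (v i))"
    unfolding cinner_def by (subst sum.swap) (simp add: mult.commute)
  finally show ?thesis .
qed

lemma oblique_proj_eq_self:
  assumes "direct_sum_UNIV W U" and "vec.subspace W" and "x \<in> W"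
  shows "oblique_proj W U x = x"
  unfolding oblique_proj_def
proof (rule the_equality)
  have "0 \<in> U" using assms(1) unfolding direct_sum_UNIV_def by blast
  then show "x \<in> W \<and> x - x \<in> U" using assms(3) by simp
next
  fix y assume y: "y \<in> W \<and> x - y \<in> U"
  then have "x - y \<in> W \<inter> U" using assms(2,3) vec.subspace_diff by blast
  then show "y = x" using assms(1) unfolding direct_sum_UNIV_def by simp
qed

theorem lemma3p2:
  fixes W V :: "(complex ^ 'n) set" and w v :: "nat \<Rightarrow> complex ^ 'n" and N :: nat
  assumes "vec.subspace W" and "vec.subspace V"
    and "direct_sum_UNIV W (orth_compl V)"
    and "is_frame W w N"
    and "oblique_dual_frame W V w v N"
  shows "(\<Sum>i=1..N. (cmod (cinner (w i) (v i)))\<^sup>2) \<ge> (real (vec.dim W))\<^sup>2 / real N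
    \<and> ((\<Sum>i=1..N. (cmod (cinner (w i) (v i)))\<^sup>2) = (real (vec.dim W))\<^sup>2 / real N
         \<longleftrightarrow> (\<forall>i\<in>{1..N}. cinner (w i) (v i) = complex_of_real (real (vec.dim W) / real N)))"
proof -
  define P where "P = mixed_frame_operator {1..N} v w"
  have P_proj: "P = oblique_proj W (orth_compl V)"
    using assms(5) unfolding oblique_dual_frame_def P_def mixed_frame_operator_def by auto
  have lin: "Vector_Spaces.linear (*s) (*s) P"
    unfolding P_def by (rule linear_mixed_frame_operator)
  have range: "P f \<in> W" for f
    using assms(1,4) unfolding P_def mixed_frame_operator_def is_frame_def
    by (intro vec.subspace_sum vec.subspace_scale) auto
  have fixes_W: "P x = x" if "x \<in> W" for x
    unfolding P_proj using oblique_proj_eq_self[OF assms(3,1) that] .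
  have "(\<Sum>i=1..N. cinner (w i) (v i)) = trace (matrix P)"
    unfolding P_def trace_matrix_mixed_frame_operator ..
  also have "\<dots> = of_real (real (vec.dim W))"
    using trace_matrix_projection_eq_dim[OF lin assms(1) range fixes_W] by simp
  finally have trace: "(\<Sum>i=1..N. cinner (w i) (v i)) = of_real (real (vec.dim W))" .
  have card: "card {1..N} = N" by simp
  show ?thesis
    using sum_cmod_power2_ge[OF trace] sum_cmod_power2_eq_iff[OF trace finite_atLeastAtMost]
    unfolding card by blast
qed

end
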